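(* Let $(\vec u,\vec B)$ and $(\vec t,\vec C)$ be proper factorization patterns over $A$, and let $(v_n)_n$, $(w_n)_n$ be sequences of words such that $(v_n)_n$ is $(\vec u,\vec B)$-adequate, $(w_n)_n$ is $(\vec t,\vec C)$-adequate, and $v_n\sim_n w_n$ for every $n\ge0$. Then $\vec u=\vec t$ and $\vec B=\vec C$.
   Context: For $B\subseteq A$, $B^{\circledast}$ is the set of words over $B$ in which every symbol of $B$ occurs. A factorization pattern is $(\vec u,\vec B)$ with $\vec u=(u_0,\dots,u_p)\in(A^* )^{p+1}$, $\vec B=(B_1,\dots,B_p)$ nonempty subsets of $A$, $p\ge0$; $L(\vec u,\vec B,n)=u_0(B_1^{\circledast})^nu_1\cdots(B_p^{\circledast})^nu_p$; $(w_n)_n$ is $(\vec u,\vec B)$-adequate if $w_n\in L(\vec u,\vec B,n)$ for all $n$. The pattern is proper if (i) for all $i=0,\dots,p-1$ the last symbol of $u_i$ (if $u_i$ nonempty) is not in $B_{i+1}$, and for all $i=1,\dots,p$ the first symbol of $u_i$ (if nonempty) is not in $B_i$; and (ii) for all $i=1,\dots,p-1$, if $u_i=\varepsilon$ then $B_i\not\subseteq B_{i+1}$ and $B_{i+1}\not\subseteq B_i$. For words $v,w$, $v\sim_n w$ means that $v$ and $w$ have the same subwords (subsequences) of length at most $n$. *)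

theory Defs
  imports Main "HOL-Library.Sublist"
begin

text \<open>Words over the alphabet are lists. B^circledast: words over B in which every symbol of B occurs.\<close>
definition full_words :: "'a set \<Rightarrow> 'a list set" where
  "full_words B = {w. set w = B}"

fun lang_pow :: "'a list set \<Rightarrow> nat \<Rightarrow> 'a list set" where
  "lang_pow L 0 = {[]}"
| "lang_pow L (Suc n) = {x @ y | x y. x \<in> L \<and> y \<in> lang_pow L n}"

text \<open>L(u,B,n) = u_0 (B_1^circledast)^n u_1 ... (B_p^circledast)^n u_p, where u = [u_0,...,u_p], B = [B_1,...,B_p].\<close>
fun pat_lang :: "'a list list \<Rightarrow> 'a set list \<Rightarrow> nat \<Rightarrow> 'a list set" where
  "pat_lang [u0] [] n = {u0}"
| "pat_lang (u0 # us) (B1 # Bs) n =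
     {u0 @ x @ y | x y. x \<in> lang_pow (full_words B1) n \<and> y \<in> pat_lang us Bs n}"
| "pat_lang _ _ n = {}"

definition fact_pattern :: "'a set \<Rightarrow> 'a list list \<Rightarrow> 'a set list \<Rightarrow> bool" where
  "fact_pattern A u B \<longleftrightarrow> length u = length B + 1 \<and>
     (\<forall>i < length u. set (u ! i) \<subseteq> A) \<and>
     (\<forall>i < length B. B ! i \<noteq> {} \<and> B ! i \<subseteq> A)"

text \<open>Properness, with 0-based list indices: u ! i is u_i, B ! i is B_{i+1}.\<close>
definition proper_pattern :: "'a set \<Rightarrow> 'a list list \<Rightarrow> 'a set list \<Rightarrow> bool" where
  "proper_pattern A u B \<longleftrightarrow> fact_pattern A u B \<and>
     (\<forall>i < length B. u ! i \<noteq> [] \<longrightarrow> last (u ! i) \<notin> B ! i) \<and>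
     (\<forall>i < length B. u ! (Suc i) \<noteq> [] \<longrightarrow> hd (u ! (Suc i)) \<notin> B ! i) \<and>
     (\<forall>i. 1 \<le> i \<and> i + 1 < length u \<and> u ! i = [] \<longrightarrow>
          \<not> (B ! (i - 1) \<subseteq> B ! i) \<and> \<not> (B ! i \<subseteq> B ! (i - 1)))"

definition adequate :: "'a list list \<Rightarrow> 'a set list \<Rightarrow> (nat \<Rightarrow> 'a list) \<Rightarrow> bool" where
  "adequate u B w \<longleftrightarrow> (\<forall>n. w n \<in> pat_lang u B n)"

definition sim_n :: "nat \<Rightarrow> 'a list \<Rightarrow> 'a list \<Rightarrow> bool" where
  "sim_n n v w \<longleftrightarrow> (\<forall>x. length x \<le> n \<longrightarrow> (subseq x v \<longleftrightarrow> subseq x w))"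

end

theory Submission
  imports Defs
begin

(* A pattern (u,B) is encoded as an expression over two kinds of atoms:
   an optional letter  Opt a  (language {\<epsilon>, a}) and a star  Star B  (language: all words over B).
   The expression expr_of u B = u_0 Star B_1 u_1 ... Star B_p u_p, read with optional letters,
   accepts exactly the subwords of the words of the pattern languages; more precisely, for an
   adequate sequence (v_n), a word y is accepted iff y is a subword of v_{|y|}.
   Hence  v_n \<sim>_n w_n  for all n forces the expressions of the two patterns to accept the
   same words.  Properness of a pattern makes its expression "reduced": no atom can be
   absorbed by its neighbour.  The core of the file is a uniqueness theorem: two reduced
   expressions with the same language are equal.  It is proved by peeling off equal head atoms,
   which requires the more general notion of expressions agreeing on all words that do not start
   with a letter of a given set X.  Finally expr_of is injective, which gives u = t and B = C. *)

section \<open>Expressions of optional letters and stars\<close>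

datatype 'a atom = Opt 'a | Star "'a set"

fun letters :: "'a atom \<Rightarrow> 'a set" where
  "letters (Opt a) = {a}"
| "letters (Star B) = B"

fun accepts :: "'a atom list \<Rightarrow> 'a list \<Rightarrow> bool" where
  "accepts [] [] = True"
| "accepts [] (c # w) = False"
| "accepts (Opt a # r) [] = accepts r []"
| "accepts (Opt a # r) (c # w) = (accepts r (c # w) \<or> (c = a \<and> accepts r w))"
| "accepts (Star B # r) [] = accepts r []"
| "accepts (Star B # r) (c # w) = (accepts r (c # w) \<or> (c \<in> B \<and> accepts (Star B # r) w))"

lemma accepts_Nil: "accepts r []"
proof (induction r)
  case (Cons x r) then show ?case by (cases x) auto
qed simp

lemma accepts_empty_expr: "accepts [] w \<longleftrightarrow> w = []"
  by (cases w) auto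

text \<open>Every atom language contains the empty word, so prefixing an atom enlarges the language.\<close>
lemma accepts_ConsI: "accepts r w \<Longrightarrow> accepts (x # r) w"
  by (cases x; cases w) auto

lemma accepts_drop_letter: "accepts r (c # w) \<Longrightarrow> accepts r w"
proof (induction r arbitrary: c w)
  case (Cons x r) then show ?case by (cases x) (auto intro: accepts_ConsI)
qed simp

lemma accepts_Opt_same: "accepts (Opt a # r) (a # w) = accepts r w"
  by (auto dest: accepts_drop_letter)

lemma accepts_skip_atom: "c \<notin> letters x \<Longrightarrow> accepts (x # r) (c # w) = accepts r (c # w)"
  by (cases x) auto

lemma accepts_Star_absorb: "c \<in> B \<Longrightarrow> accepts (Star B # r) (c # w) = accepts (Star B # r) w"
  by (auto dest: accepts_drop_letter intro: accepts_ConsI)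

lemma accepts_prepend: "c \<in> letters x \<Longrightarrow> accepts r w \<Longrightarrow> accepts (x # r) (c # w)"
  by (cases x) (auto intro: accepts_ConsI)

lemma accepts_Cons_mono:
  assumes "\<And>r. accepts r ys \<Longrightarrow> accepts r xs" "accepts r (y # ys)"
  shows "accepts r (y # xs)"
  using assms(2)
proof (induction r)
  case (Cons x r) then show ?case using assms(1) by (cases x) auto
qed simp

lemma accepts_subseq: "subseq v w \<Longrightarrow> accepts r w \<Longrightarrow> accepts r v"
proof (induction v w arbitrary: r rule: list_emb.induct)
  case (list_emb_Nil ys) then show ?case by (simp add: accepts_Nil)
next
  case (list_emb_Cons xs ys y) then show ?case by (blast dest: accepts_drop_letter)
next
  case (list_emb_Cons2 x y xs ys)
  then show ?case using accepts_Cons_mono[OF list_emb_Cons2.IH] by simp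
qed

section \<open>Reduced expressions\<close>

text \<open>Neighbouring atoms are compatible if neither can absorb the other.\<close>
fun compatible :: "'a atom \<Rightarrow> 'a atom \<Rightarrow> bool" where
  "compatible (Opt a) (Opt b) = True"
| "compatible (Opt a) (Star B) = (a \<notin> B)"
| "compatible (Star B) (Opt a) = (a \<notin> B)"
| "compatible (Star B) (Star C) = (\<not> B \<subseteq> C \<and> \<not> C \<subseteq> B)"

fun reduced :: "'a atom list \<Rightarrow> bool" where
  "reduced [] = True"
| "reduced [x] = (letters x \<noteq> {})"
| "reduced (x # y # r) = (letters x \<noteq> {} \<and> compatible x y \<and> reduced (y # r))"

lemma reduced_Cons:
  "reduced (x # r) \<longleftrightarrow> letters x \<noteq> {} \<and> (r \<noteq> [] \<longrightarrow> compatible x (hd r)) \<and> reduced r"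
  by (cases r) auto

lemma reduced_head_needed: "reduced (x # d) \<Longrightarrow> \<not> (\<forall>w. accepts (x # d) w \<longrightarrow> accepts d w)"
proof (induction d arbitrary: x)
  case Nil
  then obtain c where "c \<in> letters x" by auto
  then have "accepts [x] [c]" by (intro accepts_prepend) (auto simp: accepts_Nil)
  then show ?case by auto
next
  case (Cons z d)
  from Cons.prems have compat: "compatible x z" and red_zd: "reduced (z # d)"
    and ne: "letters x \<noteq> {}" by auto
  obtain c where c_x: "c \<in> letters x" and c_z: "c \<notin> letters z \<or> z = Opt c"
    using compat ne by (cases x; cases z) auto
  show ?case
  proof
    assume incl: "\<forall>w. accepts (x # z # d) w \<longrightarrow> accepts (z # d) w"
    have "\<forall>w. accepts (z # d) w \<longrightarrow> accepts d w"
    proof (intro allI impI)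
      fix w assume "accepts (z # d) w"
      then have "accepts (z # d) (c # w)" using incl accepts_prepend[OF c_x] by blast
      then show "accepts d w"
        using c_z accepts_skip_atom accepts_Opt_same accepts_drop_letter by metis
    qed
    then show False using Cons.IH red_zd by blast
  qed
qed

section \<open>Agreement outside a set of letters\<close>

definition agree_outside :: "'a set \<Rightarrow> 'a atom list \<Rightarrow> 'a atom list \<Rightarrow> bool" where
  "agree_outside X a b \<longleftrightarrow> (\<forall>w. (w = [] \<or> hd w \<notin> X) \<longrightarrow> (accepts a w \<longleftrightarrow> accepts b w))"

lemma agree_outside_sym: "agree_outside X a b \<Longrightarrow> agree_outside X b a"
  unfolding agree_outside_def by blast

lemma agree_outsideD: "agree_outside X a b \<Longrightarrow> c \<notin> X \<Longrightarrow> accepts a (c # w) \<longleftrightarrow> accepts b (c # w)"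
  unfolding agree_outside_def by auto

lemma agree_outside_into_tail:
  assumes "c \<notin> X" "c \<in> letters y" "c \<notin> letters x"
    and agree: "agree_outside X (x # a) (y # b)" and acc: "accepts (y # b) w"
  shows "accepts a w"
proof (cases y)
  case (Star C)
  then have "accepts (y # b) (c # w)" using accepts_Star_absorb assms by auto
  then have "accepts (x # a) (c # w)" using agree_outsideD[OF agree assms(1)] by blast
  then show ?thesis using accepts_skip_atom[OF assms(3)] accepts_drop_letter by metis
next
  case (Opt c')
  then have y: "y = Opt c" using assms(2) by simp
  show ?thesis
  proof (cases w)
    case Nil then show ?thesis by (simp add: accepts_Nil)
  next
    case (Cons d w')
    then consider "accepts b (d # w')" | "d = c" "accepts b w'" using acc y by auto
    then show ?thesis
    proof cases
      case 1
      then have "accepts (y # b) (c # d # w')" using accepts_prepend[OF assms(2)] by blast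
      then have "accepts (x # a) (c # d # w')" using agree_outsideD[OF agree assms(1)] by blast
      then show ?thesis using accepts_skip_atom[OF assms(3)] accepts_drop_letter Cons by metis
    next
      case 2
      then have "accepts (x # a) (c # w')" using agree_outsideD[OF agree assms(1)] acc Cons by blast
      then show ?thesis using accepts_skip_atom[OF assms(3)] Cons 2 by metis
    qed
  qed
qed

text \<open>Heads reading mutually exclusive letters outside X cannot agree: x would be redundant.\<close>
lemma agree_outside_exclusive_heads:
  assumes "reduced (x # a)" "c \<notin> X" "c \<in> letters y" "c \<notin> letters x"
    "d \<notin> X" "d \<in> letters x" "d \<notin> letters y" "agree_outside X (x # a) (y # b)"
  shows False
proof -
  have "\<forall>w. accepts (x # a) w \<longrightarrow> accepts a w"
  proof (intro allI impI)
    fix w assume "accepts (x # a) w"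
    then have "accepts b w"
      using agree_outside_into_tail[OF assms(5,6,7) agree_outside_sym[OF assms(8)]] by blast
    then show "accepts a w"
      using agree_outside_into_tail[OF assms(2,3,4,8)] accepts_ConsI by blast
  qed
  then show False using reduced_head_needed assms(1) by blast
qed

lemma agree_outside_Opt_Star:
  assumes red: "reduced (Opt p # a)" and "p \<notin> X" "c \<in> C" "c \<notin> X"
    and agree: "agree_outside X (Opt p # a) (Star C # b)"
  shows False
proof (cases "p \<in> C")
  case True
  have tail_eq: "accepts a w \<longleftrightarrow> accepts (Star C # b) w" for w
  proof -
    have "accepts a w \<longleftrightarrow> accepts (Opt p # a) (p # w)" by (simp only: accepts_Opt_same)
    also have "\<dots> \<longleftrightarrow> accepts (Star C # b) (p # w)" using agree_outsideD[OF agree assms(2)] by blast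
    also have "\<dots> \<longleftrightarrow> accepts (Star C # b) w" using accepts_Star_absorb[OF True] by blast
    finally show ?thesis .
  qed
  have "\<forall>w. accepts (Opt p # a) w \<longrightarrow> accepts a w"
  proof (intro allI impI)
    fix w assume acc: "accepts (Opt p # a) w"
    show "accepts a w"
    proof (cases w)
      case Nil then show ?thesis by (simp add: accepts_Nil)
    next
      case (Cons d w')
      then show ?thesis using acc tail_eq accepts_Star_absorb[OF True] by auto
    qed
  qed
  then show False using reduced_head_needed red by blast
next
  case False
  then show False
    using agree_outside_exclusive_heads[OF red assms(4), of "Star C" p b] assms by auto
qed

lemma agree_outside_Star_Star:
  assumes red: "reduced (Star C # a)" and c: "c \<in> C" "c \<notin> X" and c': "c' \<in> C'" "c' \<notin> X"
    and agree: "agree_outside X (Star C # a) (Star C' # b)"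
  shows "accepts (Star C # a) w \<longleftrightarrow> accepts (Star C' # b) w"
proof -
  have via: "accepts (Star C # a) w \<longleftrightarrow> accepts (Star C' # b) w"
    if "e \<in> C" "e \<in> C'" "e \<notin> X" for e
  proof -
    have "accepts (Star C # a) w \<longleftrightarrow> accepts (Star C # a) (e # w)"
      by (rule accepts_Star_absorb[OF that(1), symmetric])
    also have "\<dots> \<longleftrightarrow> accepts (Star C' # b) (e # w)" using agree_outsideD[OF agree \<open>e \<notin> X\<close>] .
    also have "\<dots> \<longleftrightarrow> accepts (Star C' # b) w" by (rule accepts_Star_absorb[OF that(2)])
    finally show ?thesis .
  qed
  have "c \<in> C' \<or> c' \<in> C"
    using agree_outside_exclusive_heads[OF red c'(2) _ _ c(2) _ _ agree] c c' by auto
  then show ?thesis using via c c' by blast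
qed

lemma same_language_letters_subset:
  assumes "reduced (y # b)" "\<forall>w. accepts (x # a) w \<longleftrightarrow> accepts (y # b) w"
  shows "letters x \<subseteq> letters y"
proof
  fix c assume "c \<in> letters x"
  show "c \<in> letters y"
  proof (rule ccontr)
    assume "c \<notin> letters y"
    have "agree_outside {} (y # b) (x # a)" using assms(2) unfolding agree_outside_def by blast
    then have "\<forall>w. accepts (y # b) w \<longrightarrow> accepts b w"
      using agree_outside_into_tail[of c "{}" x y b a] \<open>c \<in> letters x\<close> \<open>c \<notin> letters y\<close> assms(2)
      by blast
    then show False using reduced_head_needed assms(1) by blast
  qed
qed

lemma agree_outside_heads_equal:
  assumes rx: "reduced (x # a)" and ry: "reduced (y # b)"
    and hx: "\<not> letters x \<subseteq> X" and hy: "\<not> letters y \<subseteq> X"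
    and agree: "agree_outside X (x # a) (y # b)"
  shows "x = y"
proof (cases x)
  case x: (Opt p)
  then have p: "p \<notin> X" using hx by simp
  show ?thesis
  proof (cases y)
    case y: (Opt q)
    then have q: "q \<notin> X" using hy by simp
    show ?thesis
    proof (rule ccontr)
      assume "x \<noteq> y"
      then have "p \<noteq> q" using x y by simp
      then show False
        using agree_outside_exclusive_heads[OF rx q _ _ p _ _ agree] x y by simp
    qed
  next
    case y: (Star C')
    then obtain c where "c \<in> C'" "c \<notin> X" using hy by auto
    then show ?thesis using agree_outside_Opt_Star[OF rx[unfolded x] p _ _ agree[unfolded x y]] by blast
  qed
next
  case x: (Star C)
  obtain c where c: "c \<in> C" "c \<notin> X" using hx x by auto
  show ?thesis
  proof (cases y)
    case y: (Opt q)
    then have "q \<notin> X" using hy by simp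
    then show ?thesis
      using agree_outside_Opt_Star[OF ry[unfolded y] _ c agree_outside_sym[OF agree, unfolded x y]]
      by blast
  next
    case y: (Star C')
    obtain c' where c': "c' \<in> C'" "c' \<notin> X" using hy y by auto
    have same: "accepts (x # a) w \<longleftrightarrow> accepts (y # b) w" for w
      using agree_outside_Star_Star[OF rx[unfolded x] c c' agree[unfolded x y]] x y by simp
    have "letters x \<subseteq> letters y" using same_language_letters_subset[OF ry] same by blast
    moreover have "letters y \<subseteq> letters x" using same_language_letters_subset[OF rx] same by blast
    ultimately have "letters x = letters y" by (rule subset_antisym)
    then show ?thesis using x y by simp
  qed
qed

text \<open>Letters that an atom absorbs when they immediately follow what it has read.\<close>
fun absorbed :: "'a atom \<Rightarrow> 'a set" where
  "absorbed (Opt a) = {}"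
| "absorbed (Star B) = B"

lemma agree_outside_tails:
  assumes agree: "agree_outside X (x # a) (x # b)" and hx: "\<not> letters x \<subseteq> X"
  shows "agree_outside (absorbed x) a b"
proof (cases x)
  case (Opt p)
  then have p: "p \<notin> X" using hx by simp
  have "accepts a w \<longleftrightarrow> accepts b w" for w
  proof -
    have "accepts a w \<longleftrightarrow> accepts (x # a) (p # w)" by (simp only: Opt accepts_Opt_same)
    also have "\<dots> \<longleftrightarrow> accepts (x # b) (p # w)" using agree_outsideD[OF agree p] by blast
    also have "\<dots> \<longleftrightarrow> accepts b w" by (simp only: Opt accepts_Opt_same)
    finally show ?thesis .
  qed
  then show ?thesis unfolding agree_outside_def by blast
next
  case (Star C)
  obtain c where c: "c \<in> C" "c \<notin> X" using hx Star by auto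
  have "accepts a (d # w) \<longleftrightarrow> accepts b (d # w)" if "d \<notin> C" for d w
  proof -
    have skip: "accepts (Star C # r) (c # d # w) \<longleftrightarrow> accepts r (d # w)" for r
    proof -
      have "accepts (Star C # r) (c # d # w) \<longleftrightarrow> accepts (Star C # r) (d # w)"
        by (rule accepts_Star_absorb[OF c(1)])
      also have "\<dots> \<longleftrightarrow> accepts r (d # w)" using that by simp
      finally show ?thesis .
    qed
    have "accepts a (d # w) \<longleftrightarrow> accepts (x # a) (c # d # w)" using skip Star by simp
    also have "\<dots> \<longleftrightarrow> accepts (x # b) (c # d # w)" using agree_outsideD[OF agree c(2)] .
    also have "\<dots> \<longleftrightarrow> accepts b (d # w)" using skip Star by simp
    finally show ?thesis .
  qed
  then show ?thesis unfolding agree_outside_def using Star accepts_Nil by (metis absorbed.simps(2) list.exhaust_sel)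
qed

lemma reduced_next_not_absorbed:
  "reduced (x # a) \<Longrightarrow> a \<noteq> [] \<Longrightarrow> \<not> letters (hd a) \<subseteq> absorbed x"
  by (cases a; cases x; cases "hd a") (auto simp: reduced_Cons)

lemma agree_outside_Nil:
  assumes "agree_outside X [] (y # b)" "\<not> letters y \<subseteq> X"
  shows False
proof -
  obtain c where c: "c \<in> letters y" "c \<notin> X" using assms(2) by auto
  have "accepts (y # b) [c]" using accepts_prepend[OF c(1)] accepts_Nil by blast
  then show False using agree_outsideD[OF assms(1) c(2)] by simp
qed

theorem reduced_unique:
  assumes "reduced a" "reduced b" "a \<noteq> [] \<longrightarrow> \<not> letters (hd a) \<subseteq> X"
    "b \<noteq> [] \<longrightarrow> \<not> letters (hd b) \<subseteq> X" "agree_outside X a b"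
  shows "a = b"
  using assms
proof (induction a arbitrary: b X)
  case Nil
  show ?case
  proof (cases b)
    case (Cons y b')
    then show ?thesis using agree_outside_Nil[of X y b'] Nil.prems by simp
  qed simp
next
  case (Cons x a)
  show ?case
  proof (cases b)
    case Nil
    then show ?thesis
      using agree_outside_Nil[of X x a] agree_outside_sym[OF Cons.prems(5)] Cons.prems(3) by simp
  next
    case (Cons y b')
    note prems = Cons.prems[unfolded Cons]
    have "x = y" using agree_outside_heads_equal[of x a y b' X] prems by simp
    have "agree_outside (absorbed x) a b'"
      using agree_outside_tails[of X x a b'] prems \<open>x = y\<close> by simp
    moreover have "reduced a" "reduced b'" using prems by (auto simp: reduced_Cons)
    moreover have "a \<noteq> [] \<longrightarrow> \<not> letters (hd a) \<subseteq> absorbed x"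
      and "b' \<noteq> [] \<longrightarrow> \<not> letters (hd b') \<subseteq> absorbed x"
      using reduced_next_not_absorbed prems(1,2) \<open>x = y\<close> by auto
    ultimately have "a = b'" using Cons.IH by blast
    then show ?thesis using Cons \<open>x = y\<close> by simp
  qed
qed

section \<open>The expression of a factorization pattern\<close>

fun expr_of :: "'a list list \<Rightarrow> 'a set list \<Rightarrow> 'a atom list" where
  "expr_of [u0] [] = map Opt u0"
| "expr_of (u0 # us) (B # Bs) = map Opt u0 @ Star B # expr_of us Bs"
| "expr_of _ _ = []"

lemma accepts_Opt_word: "accepts r z \<Longrightarrow> accepts (map Opt u @ r) (u @ z)"
  by (induction u) auto

lemma accepts_Star_word: "set x \<subseteq> B \<Longrightarrow> accepts r y \<Longrightarrow> accepts (Star B # r) (x @ y)"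
  by (induction x) (auto intro: accepts_ConsI)

lemma lang_pow_set: "x \<in> lang_pow (full_words B) n \<Longrightarrow> set x \<subseteq> B"
proof (induction n arbitrary: x)
  case (Suc n)
  then obtain x1 x2 where "x = x1 @ x2" "set x1 = B" "x2 \<in> lang_pow (full_words B) n"
    by (auto simp: full_words_def)
  then show ?case using Suc.IH by auto
qed simp

lemma pat_lang_accepted: "z \<in> pat_lang u B n \<Longrightarrow> accepts (expr_of u B) z"
proof (induction u B n arbitrary: z rule: pat_lang.induct)
  case (1 u0 n)
  then show ?case using accepts_Opt_word[of "[]" "[]" u0] by simp
next
  case (2 u0 us B1 Bs n)
  obtain x y where xy: "z = u0 @ x @ y" "x \<in> lang_pow (full_words B1) n" "y \<in> pat_lang us Bs n"
    using "2.prems" by auto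
  have "accepts (Star B1 # expr_of us Bs) (x @ y)"
    using accepts_Star_word[OF lang_pow_set[OF xy(2)] "2.IH"[OF xy(3)]] .
  then show ?case using xy(1) accepts_Opt_word by simp
qed simp_all

lemma accepts_Opt_prefix_split:
  "accepts (map Opt u @ r) y \<Longrightarrow> \<exists>y1 y2. y = y1 @ y2 \<and> subseq y1 u \<and> accepts r y2"
proof (induction u arbitrary: y)
  case Nil then show ?case by force
next
  case (Cons a u)
  show ?case
  proof (cases y)
    case Nil then show ?thesis using accepts_Nil by fastforce
  next
    case (Cons c y')
    then consider "accepts (map Opt u @ r) (c # y')" | "c = a" "accepts (map Opt u @ r) y'"
      using Cons.prems by auto
    then show ?thesis
    proof cases
      case 1
      then obtain y1 y2 where "c # y' = y1 @ y2" "subseq y1 u" "accepts r y2" using Cons.IH by blast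
      then have "y = y1 @ y2 \<and> subseq y1 (a # u) \<and> accepts r y2"
        using \<open>y = c # y'\<close> by (simp add: list_emb_Cons)
      then show ?thesis by blast
    next
      case 2
      then obtain y1 y2 where "y' = y1 @ y2" "subseq y1 u" "accepts r y2" using Cons.IH by blast
      then have "y = (a # y1) @ y2 \<and> subseq (a # y1) (a # u) \<and> accepts r y2"
        using \<open>y = c # y'\<close> 2 by simp
      then show ?thesis by blast
    qed
  qed
qed

lemma accepts_Star_split:
  "accepts (Star B # r) y \<Longrightarrow> \<exists>y1 y2. y = y1 @ y2 \<and> set y1 \<subseteq> B \<and> accepts r y2"
proof (induction y)
  case Nil then show ?case using accepts_Nil by fastforce
next
  case (Cons c y)
  then consider "accepts r (c # y)" | "c \<in> B" "accepts (Star B # r) y" by auto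
  then show ?case
  proof cases
    case 1 then show ?thesis by force
  next
    case 2
    then obtain y1 y2 where "y = y1 @ y2" "set y1 \<subseteq> B" "accepts r y2" using Cons.IH by blast
    then show ?thesis using 2 by (metis append_Cons insert_subset list.set(2))
  qed
qed

lemma subseq_lang_pow:
  "set y \<subseteq> B \<Longrightarrow> length y \<le> n \<Longrightarrow> x \<in> lang_pow (full_words B) n \<Longrightarrow> subseq y x"
proof (induction n arbitrary: y x)
  case 0 then show ?case by simp
next
  case (Suc n)
  then obtain x1 x2 where x: "x = x1 @ x2" "set x1 = B" "x2 \<in> lang_pow (full_words B) n"
    by (auto simp: full_words_def)
  show ?case
  proof (cases y)
    case Nil then show ?thesis by simp
  next
    case (Cons c y')
    then have "c \<in> set x1" "subseq y' x2" using Suc x by auto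
    then obtain p q where "x1 = p @ c # q" by (meson split_list)
    then have "subseq (c # y') (p @ c # (q @ x2))" using \<open>subseq y' x2\<close> by blast
    then show ?thesis using x Cons \<open>x1 = p @ c # q\<close> by simp
  qed
qed

lemma accepted_subseq_pat_lang:
  "accepts (expr_of u B) y \<Longrightarrow> length y \<le> n \<Longrightarrow> z \<in> pat_lang u B n \<Longrightarrow> subseq y z"
proof (induction u B n arbitrary: y z rule: pat_lang.induct)
  case (1 u0 n)
  then show ?case using accepts_Opt_prefix_split[of u0 "[]" y] by (auto simp: accepts_empty_expr)
next
  case (2 u0 us B1 Bs n)
  obtain x z' where z: "z = u0 @ x @ z'" "x \<in> lang_pow (full_words B1) n" "z' \<in> pat_lang us Bs n"
    using "2.prems"(3) by auto
  have "accepts (map Opt u0 @ Star B1 # expr_of us Bs) y" using "2.prems"(1) by simp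
  then obtain y1 y' where y: "y = y1 @ y'" "subseq y1 u0" "accepts (Star B1 # expr_of us Bs) y'"
    using accepts_Opt_prefix_split by blast
  obtain y2 y3 where y': "y' = y2 @ y3" "set y2 \<subseteq> B1" "accepts (expr_of us Bs) y3"
    using accepts_Star_split[OF y(3)] by blast
  have "subseq y2 x" using subseq_lang_pow[OF y'(2) _ z(2)] "2.prems"(2) y y' by simp
  moreover have "subseq y3 z'" using "2.IH"[OF y'(3) _ z(3)] "2.prems"(2) y y' by simp
  ultimately show ?case using y y' z by (simp add: list_emb_append_mono)
qed simp_all

lemma adequate_accepts:
  assumes "adequate u B v"
  shows "accepts (expr_of u B) y \<longleftrightarrow> subseq y (v (length y))"
proof
  have v: "v (length y) \<in> pat_lang u B (length y)" using assms by (simp add: adequate_def)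
  show "accepts (expr_of u B) y \<Longrightarrow> subseq y (v (length y))"
    using accepted_subseq_pat_lang[OF _ order.refl v] .
  show "subseq y (v (length y)) \<Longrightarrow> accepts (expr_of u B) y"
    using accepts_subseq pat_lang_accepted[OF v] by blast
qed

text \<open>Injectivity of expr_of: stars mark the block boundaries.\<close>
lemma map_Opt_neq_Star: "map Opt a \<noteq> map Opt b @ Star Y # r"
proof
  assume "map Opt a = map Opt b @ Star Y # r"
  then have "Star Y \<in> set (map Opt a)" by simp
  then show False by auto
qed

lemma map_Opt_Star_eq:
  "map Opt a @ Star X # r = map Opt b @ Star Y # r' \<Longrightarrow> a = b \<and> X = Y \<and> r = r'"
proof (induction a arbitrary: b)
  case Nil then show ?case by (cases b) auto
next
  case (Cons c a) then show ?case by (cases b) auto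
qed

lemma expr_of_inj:
  "length u = Suc (length B) \<Longrightarrow> length t = Suc (length C) \<Longrightarrow> expr_of u B = expr_of t C
   \<Longrightarrow> u = t \<and> B = C"
proof (induction B arbitrary: u t C)
  case Nil
  then obtain u0 where u: "u = [u0]" by (cases u) auto
  show ?case
  proof (cases C)
    case Nil
    then obtain t0 where "t = [t0]" using Nil.prems by (cases t) auto
    then show ?thesis using Nil.prems u \<open>C = []\<close> by (auto simp: inj_map_eq_map inj_def)
  next
    case (Cons C1 Cs)
    then obtain t0 ts where "t = t0 # ts" using Nil.prems by (cases t) auto
    then show ?thesis using Nil.prems u Cons map_Opt_neq_Star by auto
  qed
next
  case (Cons B1 Bs)
  then obtain u0 us where u: "u = u0 # us" by (cases u) auto
  show ?case
  proof (cases C)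
    case Nil
    then obtain t0 where "t = [t0]" using Cons.prems by (cases t) auto
    then show ?thesis using Cons.prems u Nil map_Opt_neq_Star by (metis expr_of.simps(1,2))
  next
    case (Cons C1 Cs)
    then obtain t0 ts where t: "t = t0 # ts" using Cons.prems by (cases t) auto
    have "u0 = t0 \<and> B1 = C1 \<and> expr_of us Bs = expr_of ts Cs"
      using map_Opt_Star_eq Cons.prems u t Cons by simp
    then show ?thesis using Cons.IH[of us ts Cs] Cons.prems u t Cons by simp
  qed
qed

section \<open>Proper patterns have reduced expressions\<close>

lemma proper_pattern_length: "proper_pattern A u B \<Longrightarrow> length u = Suc (length B)"
  unfolding proper_pattern_def fact_pattern_def by simp

lemma proper_pattern_first:
  assumes "proper_pattern A (u0 # u1 # us) (B1 # Bs)"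
  shows "B1 \<noteq> {}" "u0 \<noteq> [] \<Longrightarrow> last u0 \<notin> B1" "u1 \<noteq> [] \<Longrightarrow> hd u1 \<notin> B1"
    "u1 = [] \<Longrightarrow> Bs \<noteq> [] \<Longrightarrow> \<not> B1 \<subseteq> hd Bs \<and> \<not> hd Bs \<subseteq> B1"
proof -
  note p = assms[unfolded proper_pattern_def fact_pattern_def]
  show "B1 \<noteq> {}" "u0 \<noteq> [] \<Longrightarrow> last u0 \<notin> B1" "u1 \<noteq> [] \<Longrightarrow> hd u1 \<notin> B1"
    using p by fastforce+
  assume "u1 = []" "Bs \<noteq> []"
  moreover have "length us = length Bs" using p by simp
  moreover have "\<not> (B1 # Bs) ! 0 \<subseteq> (B1 # Bs) ! 1 \<and> \<not> (B1 # Bs) ! 1 \<subseteq> (B1 # Bs) ! 0"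
    if "1 + 1 < length (u0 # u1 # us)" "(u0 # u1 # us) ! 1 = []"
    using assms that unfolding proper_pattern_def by fastforce
  ultimately show "\<not> B1 \<subseteq> hd Bs \<and> \<not> hd Bs \<subseteq> B1"
    by (cases Bs) auto
qed

lemma proper_pattern_tail:
  assumes "proper_pattern A (u0 # us) (B1 # Bs)"
  shows "proper_pattern A us Bs"
proof -
  note p = assms[unfolded proper_pattern_def fact_pattern_def]
  have gap: "\<not> (B1 # Bs) ! (i - 1) \<subseteq> (B1 # Bs) ! i \<and> \<not> (B1 # Bs) ! i \<subseteq> (B1 # Bs) ! (i - 1)"
    if "1 \<le> i" "i + 1 < length (u0 # us)" "(u0 # us) ! i = []" for i
    using assms that unfolding proper_pattern_def by blast
  have last_cond: "\<not> Bs ! (i - 1) \<subseteq> Bs ! i \<and> \<not> Bs ! i \<subseteq> Bs ! (i - 1)"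
    if "1 \<le> i" "i + 1 < length us" "us ! i = []" for i
  proof -
    have "\<not> (B1 # Bs) ! (Suc i - 1) \<subseteq> (B1 # Bs) ! Suc i \<and> \<not> (B1 # Bs) ! Suc i \<subseteq> (B1 # Bs) ! (Suc i - 1)"
      using gap[of "Suc i"] that by simp
    moreover have "(B1 # Bs) ! (Suc i - 1) = Bs ! (i - 1)" using that(1) by (cases i) auto
    ultimately show ?thesis by simp
  qed
  show ?thesis
    using p last_cond unfolding proper_pattern_def fact_pattern_def by (simp add: All_less_Suc2)
qed

lemma reduced_Opt_prefix:
  "reduced r \<Longrightarrow> (u \<noteq> [] \<and> r \<noteq> [] \<longrightarrow> compatible (Opt (last u)) (hd r)) \<Longrightarrow> reduced (map Opt u @ r)"
proof (induction u)
  case (Cons a u)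
  then show ?case by (cases u) (auto simp: reduced_Cons)
qed simp

text \<open>Properness is exactly what makes neighbouring atoms of expr_of compatible.\<close>
lemma proper_pattern_reduced: "proper_pattern A u B \<Longrightarrow> reduced (expr_of u B)"
proof (induction B arbitrary: u)
  case Nil
  then obtain u0 where "u = [u0]" using proper_pattern_length by (cases u) fastforce+
  then show ?case using reduced_Opt_prefix[of "[]" u0] by simp
next
  case (Cons B1 Bs)
  obtain u0 u1 us where u: "u = u0 # u1 # us"
    using proper_pattern_length[OF Cons.prems] by (cases u; cases "tl u") auto
  note first = proper_pattern_first[OF Cons.prems[unfolded u]]
  let ?r = "expr_of (u1 # us) Bs"
  have red_r: "reduced ?r" using Cons.IH proper_pattern_tail Cons.prems u by blast
  have "?r \<noteq> [] \<longrightarrow> compatible (Star B1) (hd ?r)"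
    using first by (cases u1; cases Bs; cases us) auto
  then have "reduced (Star B1 # ?r)" using red_r first(1) by (simp add: reduced_Cons)
  then show ?case using reduced_Opt_prefix[of "Star B1 # ?r" u0] first(2) u by simp
qed

theorem lemma3p2:
  fixes A :: "'a set" and u t :: "'a list list" and B C :: "'a set list"
    and v w :: "nat \<Rightarrow> 'a list"
  assumes "finite A" and "proper_pattern A u B" and "proper_pattern A t C"
    and "adequate u B v" and "adequate t C w"
    and "\<And>n. sim_n n (v n) (w n)"
  shows "u = t \<and> B = C"
proof -
  have same_lang: "accepts (expr_of u B) y \<longleftrightarrow> accepts (expr_of t C) y" for y
  proof -
    have "accepts (expr_of u B) y \<longleftrightarrow> subseq y (v (length y))" using adequate_accepts assms(4) by blast
    also have "\<dots> \<longleftrightarrow> subseq y (w (length y))" using assms(6)[of "length y"] unfolding sim_n_def by blast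
    also have "\<dots> \<longleftrightarrow> accepts (expr_of t C) y" using adequate_accepts assms(5) by blast
    finally show ?thesis .
  qed
  have red_u: "reduced (expr_of u B)" and red_t: "reduced (expr_of t C)"
    using proper_pattern_reduced assms(2,3) by blast+
  have "expr_of u B = expr_of t C"
  proof (rule reduced_unique[OF red_u red_t, of "{}"])
    show "agree_outside {} (expr_of u B) (expr_of t C)" using same_lang by (simp add: agree_outside_def)
  qed (use red_u red_t in \<open>auto simp: reduced_Cons neq_Nil_conv\<close>)
  then show ?thesis using expr_of_inj proper_pattern_length assms(2,3) by blast
qed

end
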